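(* Let $k\ge2$ be an integer and $\mathbb{F}$ a finite field. There is a black-box transformation with parameters $(t=1,k,k_0=2,\ell=k-1,\mathbb{F})$ and rate $1-1/k$, in which $c_j=k-1$ for every $j\in[k]$.
   Context: A $k$-party $\ell$-LMSSS over $\mathbb{F}$: an $\mathbb{F}$-linear map $\mathsf{Share}:\mathbb{F}^\ell\times\mathbb{F}^e\to\mathbb{F}^{b_1}\times\dots\times\mathbb{F}^{b_k}$ together with an access structure (sets that can linearly recover the secret) and adversary structure (sets whose shares, under uniform randomness, are distributed independently of the secret); information rate $\ell/\sum_jb_j$. Black-box transformation with parameters $(t,k,k_0,\ell,\mathbb{F})$: a $k$-party $\ell$-LMSSS $\mathcal{L}=(\mathsf{Share}_\mathcal{L},\mathsf{Rec}_\mathcal{L})$ over $\mathbb{F}$ with parameters $(e,b_1,\dots,b_k)$ (all $k$ parties together qualified), replication functions $\psi_i:[k_0]\to2^{[k]}$ ($i\in[\ell]$) and conversion functions $\varphi_j:\mathbb{F}^{c_j}\to\mathbb{F}^{b_j}$, $c_j=\sum_{i=1}^\ell|\{v\in[k_0]:j\in\psi_i(v)\}|$, such that for every $(y_i^{(v)})_{i\in[\ell],v\in[k_0]}$ there is $\mathbf{r}$ with $(\varphi_j(\mathbf{Y}(j)))_{j}=\mathsf{Share}_\mathcal{L}((\sum_vy_1^{(v)},\dots,\sum_vy_\ell^{(v)}),\mathbf{r})$, where $\mathbf{Y}(j)=(y_i^{(v)})_{i,v:\,j\in\psi_i(v)}$; and for every $T\subseteq[k]$ with $|T|\le t$ and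 every $i$, $|\bigcup_{j\in T}\{v:j\in\psi_i(v)\}|\le k_0-1$. Its rate is the information rate of $\mathcal{L}$. *)

theory Defs
  imports Complex_Main
begin

text \<open>Conventions: all indices are 0-based. A vector in F^n is a function nat => 'f of
which only the entries < n matter. Party j ranges over j < k, share coordinate a < b j,
secret coordinate x < l, randomness coordinate c < e.\<close>

definition lin_share ::
  "nat \<Rightarrow> nat \<Rightarrow> (nat \<Rightarrow> nat \<Rightarrow> nat \<Rightarrow> 'f) \<Rightarrow> (nat \<Rightarrow> nat \<Rightarrow> nat \<Rightarrow> 'f)
   \<Rightarrow> (nat \<Rightarrow> 'f) \<Rightarrow> (nat \<Rightarrow> 'f) \<Rightarrow> nat \<Rightarrow> nat \<Rightarrow> 'f::field" where
  "lin_share l e A B s r j a = (\<Sum>x<l. A j a x * s x) + (\<Sum>c<e. B j a c * r c)"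

definition is_linear_share ::
  "nat \<Rightarrow> nat \<Rightarrow> ((nat \<Rightarrow> 'f) \<Rightarrow> (nat \<Rightarrow> 'f) \<Rightarrow> nat \<Rightarrow> nat \<Rightarrow> 'f::field) \<Rightarrow> bool" where
  "is_linear_share l e Sh \<longleftrightarrow> (\<exists>A B. Sh = lin_share l e A B)"

definition lin_recovers ::
  "nat \<Rightarrow> (nat \<Rightarrow> nat) \<Rightarrow> ((nat \<Rightarrow> 'f) \<Rightarrow> (nat \<Rightarrow> 'f) \<Rightarrow> nat \<Rightarrow> nat \<Rightarrow> 'f::field)
   \<Rightarrow> nat set \<Rightarrow> bool" where
  "lin_recovers l b Sh T \<longleftrightarrow>
     (\<exists>R. \<forall>s r. \<forall>x<l. s x = (\<Sum>j\<in>T. \<Sum>a<b j. R x j a * Sh s r j a))"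

definition info_rate :: "nat \<Rightarrow> nat \<Rightarrow> (nat \<Rightarrow> nat) \<Rightarrow> real" where
  "info_rate l k b = real l / real (\<Sum>j<k. b j)"

text \<open>Index set {(i,v) : i < l, v < k0, j \<in> psi_i(v)}; its cardinality is c_j.\<close>
definition repl_idx :: "(nat \<Rightarrow> nat \<Rightarrow> nat set) \<Rightarrow> nat \<Rightarrow> nat \<Rightarrow> nat \<Rightarrow> (nat \<times> nat) set" where
  "repl_idx psi l k0 j = {(i, v). i < l \<and> v < k0 \<and> j \<in> psi i v}"

text \<open>Black-box transformation with parameters (t,k,k0,l,F): LMSSS Share with
randomness dimension e and share sizes b, replication functions psi i : [k0] -> 2^[k],
conversion functions phi j : F^{c_j} -> F^{b_j}, the latter represented as functions
of the whole array y that depend only on the entries y i v with (i,v) in repl_idx (= Y(j)).\<close>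
definition black_box_transformation ::
  "nat \<Rightarrow> nat \<Rightarrow> nat \<Rightarrow> nat \<Rightarrow> nat \<Rightarrow> (nat \<Rightarrow> nat)
   \<Rightarrow> ((nat \<Rightarrow> 'f) \<Rightarrow> (nat \<Rightarrow> 'f) \<Rightarrow> nat \<Rightarrow> nat \<Rightarrow> 'f::field)
   \<Rightarrow> (nat \<Rightarrow> nat \<Rightarrow> nat set) \<Rightarrow> (nat \<Rightarrow> (nat \<Rightarrow> nat \<Rightarrow> 'f) \<Rightarrow> nat \<Rightarrow> 'f) \<Rightarrow> bool" where
  "black_box_transformation t k k0 l e b Sh psi phi \<longleftrightarrow>
     is_linear_share l e Sh \<and>
     lin_recovers l b Sh {..<k} \<and>
     (\<forall>i<l. \<forall>v<k0. psi i v \<subseteq> {..<k}) \<and>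
     (\<forall>j<k. \<forall>y y'. (\<forall>(i, v)\<in>repl_idx psi l k0 j. y i v = y' i v) \<longrightarrow>
                     (\<forall>a<b j. phi j y a = phi j y' a)) \<and>
     (\<forall>y. \<exists>r. \<forall>j<k. \<forall>a<b j. phi j y a = Sh (\<lambda>i. \<Sum>v<k0. y i v) r j a) \<and>
     (\<forall>T. T \<subseteq> {..<k} \<and> card T \<le> t \<longrightarrow>
        (\<forall>i<l. card (\<Union>j\<in>T. {v. v < k0 \<and> j \<in> psi i v}) \<le> k0 - 1))"

end

theory Submission
  imports Defs
begin

text \<open>With \<open>l\<close> secrets and \<open>l + 1\<close> parties, party \<open>j < l\<close> holds \<open>s\<^sub>j + r\<close> and party \<open>l\<close> holds the pad
  \<open>r\<close>, so every secret is the difference of two shares. Secret \<open>i\<close> is additively split as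
  \<open>y\<^sub>i\<^sup>0 + y\<^sub>i\<^sup>1\<close>; summand \<open>y\<^sub>i\<^sup>0\<close> goes to party \<open>i\<close> alone and \<open>y\<^sub>i\<^sup>1\<close> to all other parties. Party \<open>j\<close>
  then converts to \<open>y\<^sub>j\<^sup>0 - \<Sum>\<^sub>i\<^sub>\<noteq>\<^sub>j y\<^sub>i\<^sup>1\<close>, which is its share of \<open>(y\<^sub>i\<^sup>0 + y\<^sub>i\<^sup>1)\<^sub>i\<close> under the pad
  \<open>r = - \<Sum>\<^sub>i y\<^sub>i\<^sup>1\<close>. No single party receives both summands of any secret.\<close>

definition pad_share :: "nat \<Rightarrow> (nat \<Rightarrow> 'f) \<Rightarrow> (nat \<Rightarrow> 'f) \<Rightarrow> nat \<Rightarrow> nat \<Rightarrow> 'f::field" where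
  "pad_share l = lin_share l 1 (\<lambda>j a x. if j = x then 1 else 0) (\<lambda>j a c. 1)"

definition pad_repl :: "nat \<Rightarrow> nat \<Rightarrow> nat \<Rightarrow> nat set" where
  "pad_repl l i v = (if v = 0 then {i} else {..l} - {i})"

definition pad_conv :: "nat \<Rightarrow> nat \<Rightarrow> (nat \<Rightarrow> nat \<Rightarrow> 'f) \<Rightarrow> nat \<Rightarrow> 'f::field" where
  "pad_conv l j y a =
     (if j < l then y j 0 - (\<Sum>i\<in>{..<l} - {j}. y i 1) else - (\<Sum>i<l. y i 1))"

lemma pad_share_eq: "pad_share l s r j a = (if j < l then s j else 0) + r 0"
proof -
  have "(\<Sum>x<l. (if j = x then 1 else 0) * s x) = (if j < l then s j else 0)"
    by (simp add: if_distrib[of "\<lambda>c. c * s _"] cong: if_cong)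
  then show ?thesis
    unfolding pad_share_def lin_share_def by simp
qed

lemma is_linear_share_pad_share: "is_linear_share l 1 (pad_share l)"
  unfolding is_linear_share_def pad_share_def by blast

lemma lin_recovers_pad_share: "lin_recovers l (\<lambda>_. 1) (pad_share l) {..<Suc l}"
  unfolding lin_recovers_def
proof (intro exI allI impI)
  fix s r x
  assume x: "x < l"
  let ?R = "\<lambda>x j a. if j = x then 1 else if j = l then -1 else 0 :: 'a"
  have "(\<Sum>j<Suc l. \<Sum>a<1. ?R x j a * pad_share l s r j a)
      = (\<Sum>j<Suc l. (if j = x then pad_share l s r j 0 else 0)
                    + (if j = l then - pad_share l s r j 0 else 0))"
    using x by (intro sum.cong) auto
  also have "\<dots> = pad_share l s r x 0 - pad_share l s r l 0"
    using x by (simp add: sum.distrib)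
  also have "\<dots> = s x"
    using x by (simp add: pad_share_eq)
  finally show "s x = (\<Sum>j<Suc l. \<Sum>a<1. ?R x j a * pad_share l s r j a)"
    by simp
qed

lemma pad_repl_subset: "pad_repl l i v \<subseteq> {..<Suc l}" if "i < l"
  using that unfolding pad_repl_def by auto

lemma repl_idx_pad_repl:
  assumes "j \<le> l"
  shows "repl_idx (pad_repl l) l 2 j =
    (if j < l then insert (j, 0) ((\<lambda>i. (i, 1)) ` ({..<l} - {j})) else (\<lambda>i. (i, 1)) ` {..<l})"
  using assms unfolding repl_idx_def pad_repl_def
  by (auto simp: less_2_cases_iff image_iff)

lemma card_repl_idx_pad_repl:
  assumes "j \<le> l"
  shows "card (repl_idx (pad_repl l) l 2 j) = l"
proof (cases "j < l")
  case True
  have "card ((\<lambda>i. (i, 1::nat)) ` ({..<l} - {j})) = l - 1"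
    using True by (subst card_image) (auto simp: inj_on_def)
  moreover have "(j, 0) \<notin> (\<lambda>i. (i, 1::nat)) ` ({..<l} - {j})"
    by auto
  ultimately show ?thesis
    using True repl_idx_pad_repl[OF assms] by simp
next
  case False
  then show ?thesis
    using repl_idx_pad_repl[OF assms] by (simp, subst card_image) (auto simp: inj_on_def)
qed
lemma pad_conv_local:
  assumes "j \<le> l" and "\<forall>(i, v)\<in>repl_idx (pad_repl l) l 2 j. y i v = y' i v"
  shows "pad_conv l j y a = pad_conv l j y' a"
proof (cases "j < l")
  case True
  with assms have "y j 0 = y' j 0" and "\<forall>i\<in>{..<l} - {j}. y i 1 = y' i 1"
    by (auto simp: repl_idx_pad_repl)
  with True show ?thesis
    unfolding pad_conv_def by (auto intro!: sum.cong)
next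
  case False
  with assms have "\<forall>i<l. y i 1 = y' i 1"
    by (auto simp: repl_idx_pad_repl)
  with False show ?thesis
    unfolding pad_conv_def by (auto intro!: sum.cong)
qed

lemma pad_conv_eq_pad_share:
  "pad_conv l j y a = pad_share l (\<lambda>i. \<Sum>v<2. y i v) (\<lambda>_. - (\<Sum>i<l. y i 1)) j a"
proof (cases "j < l")
  case True
  then have "(\<Sum>i<l. y i 1) = y j 1 + (\<Sum>i\<in>{..<l} - {j}. y i 1)"
    by (simp add: sum.remove)
  with True show ?thesis
    unfolding pad_conv_def pad_share_eq by (simp add: numeral_2_eq_2)
next
  case False
  then show ?thesis
    unfolding pad_conv_def pad_share_eq by simp
qed

lemma pad_repl_received_by: "{v. v < 2 \<and> j \<in> pad_repl l i v} \<subseteq> {if j = i then 0 else 1}"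
  unfolding pad_repl_def by (auto simp: less_2_cases_iff)

lemma card_pad_repl_received_le_1:
  assumes "finite T" and "card T \<le> 1"
  shows "card (\<Union>j\<in>T. {v. v < 2 \<and> j \<in> pad_repl l i v}) \<le> 1"
proof -
  consider "T = {}" | j where "T = {j}"
    using assms by (metis card_0_eq card_1_singleton_iff le_Suc_eq One_nat_def le_zero_eq)
  then show ?thesis
  proof cases
    case 2
    then show ?thesis
      using card_mono[OF _ pad_repl_received_by] by fastforce
  qed simp
qed

lemma black_box_transformation_pad:
  "black_box_transformation 1 (Suc l) 2 l 1 (\<lambda>_. 1) (pad_share l) (pad_repl l) (pad_conv l)"
  unfolding black_box_transformation_def
proof (intro conjI allI impI)
  show "is_linear_share l 1 (pad_share l)"
    by (rule is_linear_share_pad_share)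
  show "lin_recovers l (\<lambda>_. 1) (pad_share l) {..<Suc l}"
    by (rule lin_recovers_pad_share)
  show "pad_repl l i v \<subseteq> {..<Suc l}" if "i < l" and "v < 2" for i v
    using that(1) by (rule pad_repl_subset)
  show "pad_conv l j y a = pad_conv l j y' a"
    if "j < Suc l" and "\<forall>(i, v)\<in>repl_idx (pad_repl l) l 2 j. y i v = y' i v" for j y y' a
    using that by (simp add: pad_conv_local)
  show "\<exists>r. \<forall>j<Suc l. \<forall>a<1. pad_conv l j y a = pad_share l (\<lambda>i. \<Sum>v<2. y i v) r j a" for y
    using pad_conv_eq_pad_share by blast
  show "card (\<Union>j\<in>T. {v. v < 2 \<and> j \<in> pad_repl l i v}) \<le> 2 - 1"
    if "T \<subseteq> {..<Suc l} \<and> card T \<le> 1" and "i < l" for T i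
  proof -
    from that(1) have "finite T"
      using finite_subset by blast
    from card_pad_repl_received_le_1[OF this conjunct2[OF that(1)]] show ?thesis
      by simp
  qed
qed

lemma info_rate_pad: "info_rate l (Suc l) (\<lambda>_. 1) = 1 - 1 / real (Suc l)"
  unfolding info_rate_def by (simp add: field_simps)

theorem mainTheorem13:
  fixes k :: nat
  assumes "k \<ge> 2"
  shows "\<exists>e b (Sh :: (nat \<Rightarrow> 'f::{finite,field}) \<Rightarrow> (nat \<Rightarrow> 'f) \<Rightarrow> nat \<Rightarrow> nat \<Rightarrow> 'f) psi phi.
           black_box_transformation 1 k 2 (k - 1) e b Sh psi phi \<and>
           info_rate (k - 1) k b = 1 - 1 / real k \<and>
           (\<forall>j<k. card (repl_idx psi (k - 1) 2 j) = k - 1)"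
proof -
  obtain l where k: "k = Suc l"
    using assms by (cases k) auto
  show ?thesis
    unfolding k diff_Suc_1
  proof (intro exI conjI allI impI)
    show "black_box_transformation 1 (Suc l) 2 l 1 (\<lambda>_. 1) (pad_share l) (pad_repl l) (pad_conv l)"
      by (rule black_box_transformation_pad)
    show "info_rate l (Suc l) (\<lambda>_. 1) = 1 - 1 / real (Suc l)"
      by (rule info_rate_pad)
    show "card (repl_idx (pad_repl l) l 2 j) = l" if "j < Suc l" for j
      using that by (simp add: card_repl_idx_pad_repl)
  qed
qed

end
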